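(* Let $t\ge 3$ and let $\mathcal{H}$ be an $n$-vertex $3$-uniform hypergraph that does not contain $K_{2,t}$ as a trace. Let $A$ be the set of edges of $\mathcal{H}$ containing at least one pair of vertices whose co-degree in $\mathcal{H}$ is $1$, and let $B=\mathcal{H}\setminus A$. For a vertex $x$, let $N_1(x)=\{z: \exists e\in B,\ \{x,z\}\subseteq e\}$ and $N_2(x)=\{z\notin N_1(x)\cup\{x\}: \exists e\in B,\ z\in e,\ e\cap N_1(x)\neq\emptyset\}$. Fix a vertex $v$, and for $u\in N_1(v)$ let $E_u=\{e\in B: e\cap N_1(v)=\{u\}\}$ and $V_u=\{w\in N_2(v): \exists e\in E_u,\ w\in e\}$. Then $$\sum_{u\in N_1(v)}|V_u|\le (t-1)(6t-2)\,n.$$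
   Context: A hypergraph $\mathcal{H}$ contains a graph $F$ (vertices $v_1,\dots,v_p$, edges $e_1,\dots,e_q$) as a trace if there exist distinct vertices $w_1,\dots,w_p\in V(\mathcal{H})$ and distinct edges $f_1,\dots,f_q\in E(\mathcal{H})$ such that whenever $e_i=v_\alpha v_\beta$, $f_i\cap\{w_1,\dots,w_p\}=\{w_\alpha,w_\beta\}$. The co-degree of a pair $\{x,y\}$ in $\mathcal{H}$ is the number of edges of $\mathcal{H}$ containing $\{x,y\}$. $\mathcal{H}\setminus A$ denotes the hypergraph on $V(\mathcal{H})$ with edge set $E(\mathcal{H})\setminus A$. *)

theory Defs
  imports Main
begin

definition uniform3 :: "'a set \<Rightarrow> 'a set set \<Rightarrow> bool" where
  "uniform3 V E \<longleftrightarrow> finite V \<and> (\<forall>e\<in>E. e \<subseteq> V \<and> card e = 3)"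

definition contains_trace ::
  "'a set \<Rightarrow> 'a set set \<Rightarrow> 'b set \<Rightarrow> 'b set set \<Rightarrow> bool" where
  "contains_trace V E VF EF \<longleftrightarrow>
     (\<exists>w f. inj_on w VF \<and> w ` VF \<subseteq> V \<and> inj_on f EF \<and> f ` EF \<subseteq> E \<and>
            (\<forall>e\<in>EF. f e \<inter> w ` VF = w ` e))"

definition K2t_vertices :: "nat \<Rightarrow> (nat + nat) set" where
  "K2t_vertices t = Inl ` {0..<2} \<union> Inr ` {0..<t}"

definition K2t_edges :: "nat \<Rightarrow> (nat + nat) set set" where
  "K2t_edges t = {{Inl i, Inr j} | i j. i < 2 \<and> j < t}"

definition codegree :: "'a set set \<Rightarrow> 'a \<Rightarrow> 'a \<Rightarrow> nat" where
  "codegree E x y = card {e\<in>E. {x, y} \<subseteq> e}"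

definition edgesA :: "'a set set \<Rightarrow> 'a set set" where
  "edgesA E = {e\<in>E. \<exists>x y. x \<noteq> y \<and> {x, y} \<subseteq> e \<and> codegree E x y = 1}"

definition edgesB :: "'a set set \<Rightarrow> 'a set set" where
  "edgesB E = E - edgesA E"

definition N1 :: "'a set set \<Rightarrow> 'a \<Rightarrow> 'a set" where
  "N1 E x = {z. z \<noteq> x \<and> (\<exists>e\<in>edgesB E. {x, z} \<subseteq> e)}"

definition N2 :: "'a set set \<Rightarrow> 'a \<Rightarrow> 'a set" where
  "N2 E x = {z. z \<notin> N1 E x \<union> {x} \<and> (\<exists>e\<in>edgesB E. z \<in> e \<and> e \<inter> N1 E x \<noteq> {})}"

definition Eu :: "'a set set \<Rightarrow> 'a \<Rightarrow> 'a \<Rightarrow> 'a set set" where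
  "Eu E v u = {e\<in>edgesB E. e \<inter> N1 E v = {u}}"

definition Vu :: "'a set set \<Rightarrow> 'a \<Rightarrow> 'a \<Rightarrow> 'a set" where
  "Vu E v u = {w\<in>N2 E v. \<exists>e\<in>Eu E v u. w \<in> e}"

end

theory Submission
  imports Defs
begin

text \<open>Double count the pairs (u, w) with w \<in> V_u. Fix w \<in> N_2(v) and let S be the set of u \<in> N_1(v)
with w \<in> V_u. Each u \<in> S lies in an edge of B through w that meets N_1(v) only in u and misses v.
Since the pair {v, u} lies in an edge of B, its co-degree is at least 2, so there is also an edge
{v, u, y(u)} with y(u) \<noteq> w. If |S| \<ge> t(t+1), a greedy choice gives t vertices u \<in> S none of which
is y of another; together with v and w these span a trace of K_{2,t}. Hence |S| < t(t+1) \<le> (t-1)(6t-2),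
and summing over the at most n vertices w gives the bound.\<close>

lemma exists_subset_disjoint_image_bounded_fibres:
  fixes S :: "'a set" and y :: "'a \<Rightarrow> 'a"
  assumes "finite S" and "\<forall>u\<in>S. y u \<noteq> u" and "\<forall>c. card {u\<in>S. y u = c} \<le> k"
    and "j * (k + 2) \<le> card S"
  shows "\<exists>T\<subseteq>S. card T = j \<and> (\<forall>u\<in>T. y u \<notin> T)"
  using assms
proof (induction j arbitrary: S)
  case 0
  then show ?case by (intro exI[of _ "{}"]) auto
next
  case (Suc j)
  then obtain u where u: "u \<in> S" by fastforce
  \<comment> \<open>Choosing u excludes u itself, y u, and the at most k vertices mapped to u.\<close>
  define R where "R = {u, y u} \<union> {x\<in>S. y x = u}"
  have "card R \<le> card {u, y u} + card {x\<in>S. y x = u}"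
    unfolding R_def by (rule card_Un_le)
  also have "\<dots> \<le> 2 + k"
    using Suc.prems(3) by (intro add_mono) (auto simp: card_insert_if)
  finally have "card R \<le> k + 2" by simp
  moreover have "card S - card R \<le> card (S - R)"
    by (rule diff_card_le_card_Diff) (simp add: R_def Suc.prems(1))
  ultimately have "j * (k + 2) \<le> card (S - R)" using Suc.prems(4) by simp
  moreover have "card {x\<in>S - R. y x = c} \<le> k" for c
    using card_mono[of "{x\<in>S. y x = c}" "{x\<in>S - R. y x = c}"] Suc.prems(1,3) le_trans
    by fastforce
  ultimately obtain T where T: "T \<subseteq> S - R" "card T = j" "\<forall>x\<in>T. y x \<notin> T"
    using Suc.IH[of "S - R"] Suc.prems(1,2) by auto
  have "finite T" using T(1) Suc.prems(1) finite_subset by blast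
  moreover have "u \<notin> T" using T(1) R_def by auto
  moreover have "\<forall>x\<in>insert u T. y x \<notin> insert u T"
    using T Suc.prems(2) u R_def by auto
  ultimately show ?case using T(1,2) u by (intro exI[of _ "insert u T"]) auto
qed

lemma exists_subset_disjoint_image:
  fixes S :: "'a set" and y :: "'a \<Rightarrow> 'a"
  assumes "finite S" and "\<forall>u\<in>S. y u \<noteq> u" and "j * (j + 1) \<le> card S"
  shows "\<exists>T\<subseteq>S. card T = j \<and> (\<forall>u\<in>T. y u \<notin> T)"
proof (cases "\<exists>c. j \<le> card {u\<in>S. y u = c}")
  case True
  then obtain c T where T: "T \<subseteq> {u\<in>S. y u = c}" "card T = j"
    by (meson obtain_subset_with_card_n)
  then show ?thesis using assms(2) by (intro exI[of _ T]) auto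
next
  case False
  then have fibre_less: "card {u\<in>S. y u = c} < j" for c by (meson not_le)
  then have "j \<noteq> 0" by (metis less_nat_zero_code)
  moreover have "card {u\<in>S. y u = c} \<le> j - 1" for c using fibre_less[of c] by linarith
  moreover from \<open>j \<noteq> 0\<close> have "j * (j - 1 + 2) \<le> card S" using assms(3) by simp
  ultimately show ?thesis
    using exists_subset_disjoint_image_bounded_fibres[OF assms(1,2)] by blast
qed

lemma contains_traceI:
  assumes "inj_on w VF" and "w ` VF \<subseteq> V" and "\<forall>e\<in>EF. e \<subseteq> VF"
    and "\<forall>e\<in>EF. \<exists>f\<in>E. f \<inter> w ` VF = w ` e"
  shows "contains_trace V E VF EF"
proof -
  obtain f where f: "\<forall>e\<in>EF. f e \<in> E \<and> f e \<inter> w ` VF = w ` e"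
    using assms(4) by metis
  \<comment> \<open>The trace of f e on the image of w recovers e, so f is automatically injective.\<close>
  have "inj_on f EF"
  proof (rule inj_onI)
    fix e e' assume "e \<in> EF" "e' \<in> EF" "f e = f e'"
    then have "w ` e = w ` e'" using f by metis
    then show "e = e'" using inj_on_image_eq_iff[OF assms(1)] assms(3) \<open>e \<in> EF\<close> \<open>e' \<in> EF\<close> by blast
  qed
  then show ?thesis unfolding contains_trace_def using assms(1,2) f by blast
qed

lemma contains_K2t_traceI:
  fixes T :: "'a set"
  assumes "finite T" and "card T = t" and "T \<subseteq> V" and "a \<in> V" and "b \<in> V"
    and "a \<noteq> b" and "a \<notin> T" and "b \<notin> T"
    and "\<forall>u\<in>T. \<exists>e\<in>E. e \<inter> insert a (insert b T) = {a, u}"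
    and "\<forall>u\<in>T. \<exists>e\<in>E. e \<inter> insert a (insert b T) = {b, u}"
  shows "contains_trace V E (K2t_vertices t) (K2t_edges t)"
proof -
  obtain g where g: "bij_betw g {0..<t} T"
    using ex_bij_betw_nat_finite[OF assms(1)] assms(2) by blast
  define h :: "nat + nat \<Rightarrow> 'a" where "h = case_sum (\<lambda>i. if i = 0 then a else b) g"
  have two: "{0..<2::nat} = {0, 1}" by auto
  have image_h: "h ` K2t_vertices t = insert a (insert b T)"
    using g unfolding K2t_vertices_def h_def bij_betw_def by (auto simp: image_Un image_image two)
  have "inj_on h (K2t_vertices t)"
    using g assms(6-8)
    unfolding K2t_vertices_def h_def bij_betw_def
    by (auto simp: inj_on_Un image_image two inj_on_def)
  moreover have "\<forall>e\<in>K2t_edges t. \<exists>f\<in>E. f \<inter> h ` K2t_vertices t = h ` e"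
  proof
    fix e assume "e \<in> K2t_edges t"
    then obtain i j where e: "e = {Inl i, Inr j}" "i < 2" "j < t"
      unfolding K2t_edges_def by blast
    have "g j \<in> T" using g e(3) by (auto simp: bij_betw_def)
    moreover have "h ` e = {if i = 0 then a else b, g j}" using e(1) h_def by simp
    ultimately show "\<exists>f\<in>E. f \<inter> h ` K2t_vertices t = h ` e"
      unfolding image_h using assms(9,10) by auto
  qed
  moreover have "\<forall>e\<in>K2t_edges t. e \<subseteq> K2t_vertices t"
    unfolding K2t_edges_def K2t_vertices_def by auto
  ultimately show ?thesis using image_h assms(3-5) by (intro contains_traceI) auto
qed

lemma uniform3_finite_edges:
  assumes "uniform3 V E"
  shows "finite E"
  using assms unfolding uniform3_def by (meson Pow_iff finite_Pow_iff finite_subset subsetI)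

lemma N1_subset: "uniform3 V E \<Longrightarrow> N1 E v \<subseteq> V"
  unfolding uniform3_def N1_def edgesB_def by auto

lemma N2_subset: "uniform3 V E \<Longrightarrow> N2 E v \<subseteq> V"
  unfolding uniform3_def N2_def edgesB_def by auto

lemma codegree_N1_ge_2:
  assumes "finite E" and "u \<in> N1 E v"
  shows "2 \<le> codegree E v u"
proof -
  from assms(2) obtain e where e: "u \<noteq> v" "e \<in> E" "e \<notin> edgesA E" "{v, u} \<subseteq> e"
    unfolding N1_def edgesB_def by auto
  then have "codegree E v u \<noteq> 0"
    using assms(1) unfolding codegree_def by (auto simp: card_eq_0_iff)
  moreover have "codegree E v u \<noteq> 1"
  proof
    assume "codegree E v u = 1"
    then have "e \<in> edgesA E"
      unfolding edgesA_def using e by (intro CollectI conjI exI[of _ v] exI[of _ u]) auto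
    with e(3) show False by contradiction
  qed
  ultimately show ?thesis by linarith
qed

lemma card_3_eq_insert_pair:
  assumes "card e = 3" and "a \<in> e" and "b \<in> e" and "a \<noteq> b"
  shows "\<exists>c. e = {a, b, c} \<and> c \<notin> {a, b}"
proof -
  obtain p q r where e: "e = {p, q, r}" "p \<noteq> q" "q \<noteq> r" "p \<noteq> r"
    using assms(1) unfolding card_3_iff by blast
  show ?thesis using assms(2-4) unfolding e(1) using e(2-4) by auto
qed

lemma edge_through_pair_avoiding:
  assumes "uniform3 V E" and "x \<noteq> y" and "2 \<le> codegree E x y"
  shows "\<exists>z. {x, y, z} \<in> E \<and> z \<notin> {x, y, w}"
proof -
  obtain P where P: "P \<subseteq> {e\<in>E. {x, y} \<subseteq> e}" "card P = 2"
    using assms(3) unfolding codegree_def by (rule obtain_subset_with_card_n)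
  then obtain e1 e2 where "P = {e1, e2}" "e1 \<noteq> e2"
    unfolding card_2_iff by blast
  with P(1) have e12: "e1 \<noteq> e2" "e1 \<in> E" "e2 \<in> E" "{x, y} \<subseteq> e1" "{x, y} \<subseteq> e2"
    by auto
  have "card e1 = 3" "card e2 = 3" using assms(1) e12(2,3) unfolding uniform3_def by blast+
  then obtain z1 z2 where z1: "e1 = {x, y, z1}" "z1 \<notin> {x, y}"
    and z2: "e2 = {x, y, z2}" "z2 \<notin> {x, y}"
    using card_3_eq_insert_pair[of e1 x y] card_3_eq_insert_pair[of e2 x y] e12(4,5) assms(2)
    by auto
  have "z1 \<noteq> z2" using z1(1) z2(1) e12(1) by blast
  then show ?thesis
  proof (cases "z1 = w")
    case True
    then show ?thesis using z2 e12(3) \<open>z1 \<noteq> z2\<close> by auto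
  next
    case False
    then show ?thesis using z1 e12(2) by auto
  qed
qed

lemma Vu_witness_edge:
  assumes "w \<in> Vu E v u"
  shows "\<exists>e\<in>E. e \<inter> N1 E v = {u} \<and> w \<in> e \<and> v \<notin> e"
proof -
  obtain e where e: "e \<in> edgesB E" "e \<inter> N1 E v = {u}" "w \<in> e" and w: "w \<in> N2 E v"
    using assms unfolding Vu_def Eu_def by blast
  have "v \<notin> e"
  proof
    assume "v \<in> e"
    with e w have "w \<in> N1 E v" unfolding N1_def N2_def by auto
    with w show False unfolding N2_def by blast
  qed
  with e show ?thesis unfolding edgesB_def by blast
qed

lemma card_Vu_containing_less:
  assumes "uniform3 V E" and "\<not> contains_trace V E (K2t_vertices t) (K2t_edges t)"
    and "v \<in> V" and "w \<in> N2 E v"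
  shows "card {u\<in>N1 E v. w \<in> Vu E v u} < t * (t + 1)"
proof (rule ccontr)
  define S where "S = {u\<in>N1 E v. w \<in> Vu E v u}"
  assume "\<not> card {u\<in>N1 E v. w \<in> Vu E v u} < t * (t + 1)"
  then have card_S: "t * (t + 1) \<le> card S" unfolding S_def by simp
  have S_N1: "S \<subseteq> N1 E v" unfolding S_def by auto
  have fin_S: "finite S"
    using S_N1 N1_subset[OF assms(1)] assms(1) unfolding uniform3_def by (meson finite_subset)
  have w: "w \<notin> N1 E v" "v \<noteq> w" "w \<in> V"
    using assms(4) N2_subset[OF assms(1)] unfolding N2_def by auto
  have v: "v \<notin> N1 E v" unfolding N1_def by auto
  have "\<forall>u\<in>S. \<exists>z. {v, u, z} \<in> E \<and> z \<notin> {v, u, w}"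
  proof
    fix u assume "u \<in> S"
    then have "u \<in> N1 E v" "v \<noteq> u" using S_N1 v by auto
    then have "2 \<le> codegree E v u"
      using codegree_N1_ge_2[OF uniform3_finite_edges[OF assms(1)]] by blast
    then show "\<exists>z. {v, u, z} \<in> E \<and> z \<notin> {v, u, w}"
      using edge_through_pair_avoiding[OF assms(1) \<open>v \<noteq> u\<close>] by blast
  qed
  from bchoice[OF this] obtain y where y: "\<forall>u\<in>S. {v, u, y u} \<in> E \<and> y u \<notin> {v, u, w}"
    by (elim exE)
  then have "\<forall>u\<in>S. y u \<noteq> u" by blast
  then obtain T where T: "T \<subseteq> S" "card T = t" "\<forall>u\<in>T. y u \<notin> T"
    using exists_subset_disjoint_image[OF fin_S _ card_S] by blast
  have fin_T: "finite T" using T(1) fin_S finite_subset by blast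
  have T_V: "T \<subseteq> V" using T(1) S_N1 N1_subset[OF assms(1)] by blast
  have vw_T: "v \<notin> T" "w \<notin> T" using T(1) S_N1 w v by auto
  have edges_v: "\<forall>u\<in>T. \<exists>e\<in>E. e \<inter> insert v (insert w T) = {v, u}"
  proof
    fix u assume "u \<in> T"
    then have "{v, u, y u} \<in> E" "y u \<notin> insert v (insert w T)"
      using T y by auto
    then show "\<exists>e\<in>E. e \<inter> insert v (insert w T) = {v, u}"
      using \<open>u \<in> T\<close> by (intro bexI[of _ "{v, u, y u}"]) auto
  qed
  have edges_w: "\<forall>u\<in>T. \<exists>e\<in>E. e \<inter> insert v (insert w T) = {w, u}"
  proof
    fix u assume "u \<in> T"
    then have "w \<in> Vu E v u" using T(1) unfolding S_def by blast
    then obtain e where "e \<in> E" "e \<inter> N1 E v = {u}" "w \<in> e" "v \<notin> e"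
      by (blast dest: Vu_witness_edge)
    moreover have "T \<subseteq> N1 E v" using T(1) S_N1 by blast
    ultimately show "\<exists>e\<in>E. e \<inter> insert v (insert w T) = {w, u}"
      using \<open>u \<in> T\<close> by (intro bexI[of _ e]) auto
  qed
  have "contains_trace V E (K2t_vertices t) (K2t_edges t)"
    by (rule contains_K2t_traceI[OF fin_T T(2) T_V assms(3) w(3) w(2) vw_T edges_v edges_w])
  with assms(2) show False by contradiction
qed

theorem mainTheorem8:
  fixes V :: "'a set" and E :: "'a set set" and t n :: nat and v :: 'a
  assumes "t \<ge> 3"
    and "uniform3 V E"
    and "card V = n"
    and "\<not> contains_trace V E (K2t_vertices t) (K2t_edges t)"
    and "v \<in> V"
  shows "(\<Sum>u\<in>N1 E v. card (Vu E v u)) \<le> (t - 1) * (6 * t - 2) * n"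
proof -
  have fin: "finite (N1 E v)" "finite (N2 E v)"
    using N1_subset N2_subset assms(2) unfolding uniform3_def by (meson finite_subset)+
  obtain s where "t = s + 3" using assms(1) by (metis add.commute le_add_diff_inverse)
  then have bound: "t * (t + 1) \<le> (t - 1) * (6 * t - 2)" by (simp add: algebra_simps)
  have "(\<Sum>u\<in>N1 E v. card (Vu E v u)) = (\<Sum>u\<in>N1 E v. card {w\<in>N2 E v. w \<in> Vu E v u})"
    unfolding Vu_def by (intro sum.cong) auto
  also have "\<dots> = (\<Sum>w\<in>N2 E v. card {u\<in>N1 E v. w \<in> Vu E v u})"
    by (rule sum_multicount_gen[OF fin]) simp
  also have "\<dots> \<le> (\<Sum>w\<in>N2 E v. (t - 1) * (6 * t - 2))"
  proof (rule sum_mono)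
    fix w assume "w \<in> N2 E v"
    with bound show "card {u\<in>N1 E v. w \<in> Vu E v u} \<le> (t - 1) * (6 * t - 2)"
      using card_Vu_containing_less[OF assms(2,4,5) \<open>w \<in> N2 E v\<close>] by linarith
  qed
  also have "\<dots> \<le> (t - 1) * (6 * t - 2) * n"
    using card_mono[OF _ N2_subset[OF assms(2)]] assms(2,3) unfolding uniform3_def by simp
  finally show ?thesis .
qed

end
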